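(* Let $m, n, k, l, t, r$ be positive integers such that $t\geq 2$, $k\geq l \geq t+r$ and $\min\{m, n\}\geq k+l-t+2$. Let $i,j\in [\max \{ m, n\}]$ with $i<j$. Let $\mathcal{A}\subseteq\binom{[n]}{k}$ and $\mathcal{B}\subseteq\binom{[m]}{l}$ be cross-$t$-intersecting families. Suppose there exists a $(t+2r)$-element subset $T\subset [\min\{m, n\}]$ such that \[S_{ij}(\mathcal{A})=\left\{A \in \binom{[n]}{k} : |A \cap T| \geq t+r \right\}\quad\text{and}\quad S_{ij}(\mathcal{B})=\left\{B \in \binom{[m]}{l} : |B \cap T| \geq t+r \right\}.\] Then there is a $(t+2r)$-element subset $T'\subset [\min\{m, n\}]$ such that \[\mathcal{A}=\left\{A \in \binom{[n]}{k} : |A \cap T'| \geq t+r \right\}\quad\text{and}\quad\mathcal{B}=\left\{B \in \binom{[m]}{l} : |B \cap T'| \geq t+r \right\}.\]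
   Context: $[n]=\{1,\dots,n\}$ and $\binom{D}{k}$ denotes the family of all $k$-element subsets of a finite set $D$. Families $\mathcal{A},\mathcal{B}$ are cross-$t$-intersecting if $|A\cap B|\ge t$ for all $A\in\mathcal{A}$, $B\in\mathcal{B}$. For a family $\mathcal{F}$ of sets and indices $i,j$, the shift operation is defined for $F\in\mathcal{F}$ by $S_{ij}(F)=(F\setminus\{j\})\cup\{i\}$ if $j\in F$, $i\notin F$ and $(F\setminus\{j\})\cup\{i\}\notin\mathcal{F}$, and $S_{ij}(F)=F$ otherwise; and $S_{ij}(\mathcal{F})=\{S_{ij}(F):F\in\mathcal{F}\}$. *)

theory Defs
  imports Main
begin

definition k_subsets :: "'a set \<Rightarrow> nat \<Rightarrow> 'a set set" where
  "k_subsets D k = {A. A \<subseteq> D \<and> card A = k}"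

definition cross_t_intersecting :: "'a set set \<Rightarrow> 'a set set \<Rightarrow> nat \<Rightarrow> bool" where
  "cross_t_intersecting \<A> \<B> t \<longleftrightarrow> (\<forall>A\<in>\<A>. \<forall>B\<in>\<B>. card (A \<inter> B) \<ge> t)"

definition shift_set :: "'a \<Rightarrow> 'a \<Rightarrow> 'a set set \<Rightarrow> 'a set \<Rightarrow> 'a set" where
  "shift_set i j \<F> F =
     (if j \<in> F \<and> i \<notin> F \<and> (F - {j}) \<union> {i} \<notin> \<F> then (F - {j}) \<union> {i} else F)"

definition shift :: "'a \<Rightarrow> 'a \<Rightarrow> 'a set set \<Rightarrow> 'a set set" where
  "shift i j \<F> = shift_set i j \<F> ` \<F>"

end

theory Submission
  imports Defs
begin

(*
  If i and j lie on the same side of T, the threshold family F_T of all sets meeting T in at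
  least t + r points is invariant under exchanging i and j, and S_ij(A) = F_T forces A = F_T.
  If i is outside T and j inside, S_ij(A) = F_T is impossible: a shifted family is closed under
  replacing j by i, but F_T is not.

  In the remaining case i \<in> T, j \<notin> T, the shift determines A except on the pairs C + i, C + j
  with |C \<inter> T| = t + r - 1, of which exactly one lies in A. For such C from the A-side and D
  from the B-side with |C \<inter> D| < t, cross-t-intersection forces the same choice (i or j) for
  C and D. Two such C that differ by a single exchange share at least t + r - 2 \<ge> r points of T,
  and the bound on min m n leaves room for one D meeting both in fewer than t points. Hence the
  choice is the same for all C and all D: it is i throughout, and then A = F_T and B = F_T, or j
  throughout, and then A and B are both the threshold family of T - {i} + {j}.
*)

definition threshold_family :: "nat \<Rightarrow> nat \<Rightarrow> nat set \<Rightarrow> nat \<Rightarrow> nat set set" where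
  "threshold_family M L T s = {G \<in> k_subsets {1..M} L. s \<le> card (G \<inter> T)}"

text \<open>For \<open>C \<in> boundary_sets M L i j T s\<close>, the set \<open>insert i C\<close> meets \<open>T\<close> in exactly \<open>s\<close>
  points and, when \<open>j \<notin> T\<close>, \<open>insert j C\<close> in \<open>s - 1\<close>: these are the only pairs on which
  \<open>shift i j \<A> = threshold_family M L T s\<close> does not determine \<open>\<A>\<close>.\<close>

definition boundary_sets :: "nat \<Rightarrow> nat \<Rightarrow> nat \<Rightarrow> nat \<Rightarrow> nat set \<Rightarrow> nat \<Rightarrow> nat set set" where
  "boundary_sets M L i j T s =
     {C. C \<subseteq> {1..M} - {i, j} \<and> card C = L - 1 \<and> card (C \<inter> T) + 1 = s}"

lemma mem_shift_unmoved:
  assumes "i \<noteq> j" "i \<in> H \<longleftrightarrow> j \<in> H"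
  shows "H \<in> shift i j \<F> \<longleftrightarrow> H \<in> \<F>"
  using assms unfolding shift_def shift_set_def by (auto simp: image_iff)

lemma mem_shift_with_i:
  assumes "i \<in> H" "j \<notin> H"
  shows "H \<in> shift i j \<F> \<longleftrightarrow> H \<in> \<F> \<or> H - {i} \<union> {j} \<in> \<F>"
proof
  assume "H \<in> shift i j \<F>"
  then obtain G where G: "G \<in> \<F>" "shift_set i j \<F> G = H"
    unfolding shift_def by auto
  show "H \<in> \<F> \<or> H - {i} \<union> {j} \<in> \<F>"
  proof (cases "j \<in> G \<and> i \<notin> G \<and> G - {j} \<union> {i} \<notin> \<F>")
    case True
    then have "G = H - {i} \<union> {j}"
      using G(2) unfolding shift_set_def by auto
    then show ?thesis using G(1) by simp
  next
    case False
    then show ?thesis using G unfolding shift_set_def by auto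
  qed
next
  assume H: "H \<in> \<F> \<or> H - {i} \<union> {j} \<in> \<F>"
  show "H \<in> shift i j \<F>"
  proof (cases "H \<in> \<F>")
    case True
    then have "shift_set i j \<F> H = H" using assms unfolding shift_set_def by auto
    then show ?thesis using True unfolding shift_def by force
  next
    case False
    have "H - {i} \<union> {j} - {j} \<union> {i} = H" using assms by auto
    then have "shift_set i j \<F> (H - {i} \<union> {j}) = H"
      using assms False unfolding shift_set_def by auto
    then show ?thesis using H False unfolding shift_def by force
  qed
qed

lemma mem_shift_with_j:
  assumes "j \<in> H" "i \<notin> H"
  shows "H \<in> shift i j \<F> \<longleftrightarrow> H \<in> \<F> \<and> H - {j} \<union> {i} \<in> \<F>"
proof
  assume "H \<in> shift i j \<F>"
  then obtain G where G: "G \<in> \<F>" "shift_set i j \<F> G = H"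
    unfolding shift_def by auto
  show "H \<in> \<F> \<and> H - {j} \<union> {i} \<in> \<F>"
  proof (cases "j \<in> G \<and> i \<notin> G \<and> G - {j} \<union> {i} \<notin> \<F>")
    case True
    then have "H = G - {j} \<union> {i}"
      using G(2) unfolding shift_set_def by auto
    then show ?thesis using assms by auto
  next
    case False
    then have "G = H" using G(2) unfolding shift_set_def by auto
    then show ?thesis using G(1) False assms by auto
  qed
next
  assume "H \<in> \<F> \<and> H - {j} \<union> {i} \<in> \<F>"
  moreover from this have "shift_set i j \<F> H = H" unfolding shift_set_def by auto
  ultimately show "H \<in> shift i j \<F>" unfolding shift_def by force
qed

lemma mem_shift_move_to_i:
  assumes "H \<in> shift i j \<F>" "j \<in> H" "i \<notin> H"
  shows "H - {j} \<union> {i} \<in> shift i j \<F>"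
proof -
  have "H - {j} \<union> {i} \<in> \<F>"
    using mem_shift_with_j[OF assms(2,3)] assms(1) by blast
  moreover have "i \<in> H - {j} \<union> {i}" "j \<notin> H - {j} \<union> {i}" using assms(2,3) by auto
  ultimately show ?thesis using mem_shift_with_i[of i "H - {j} \<union> {i}" j \<F>] by blast
qed

lemma shift_eq_self_if_no_j:
  assumes "\<And>F. F \<in> \<F> \<Longrightarrow> j \<notin> F"
  shows "shift i j \<F> = \<F>"
proof -
  have "shift_set i j \<F> F = F" if "F \<in> \<F>" for F
    unfolding shift_set_def using assms[OF that] by auto
  then have "shift i j \<F> = (\<lambda>F. F) ` \<F>"
    unfolding shift_def by (rule image_cong[OF refl])
  then show ?thesis by simp
qed

lemma shift_eq_self_if_reverse_closed:
  assumes ne: "i \<noteq> j"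
    and closed: "\<And>H. H \<in> shift i j \<F> \<Longrightarrow> i \<in> H \<Longrightarrow> j \<notin> H \<Longrightarrow> H - {i} \<union> {j} \<in> shift i j \<F>"
  shows "shift i j \<F> = \<F>"
proof (rule set_eqI)
  fix H
  consider "i \<in> H \<longleftrightarrow> j \<in> H" | "i \<in> H" "j \<notin> H" | "j \<in> H" "i \<notin> H"
    by blast
  then show "H \<in> shift i j \<F> \<longleftrightarrow> H \<in> \<F>"
  proof cases
    case 1
    then show ?thesis using mem_shift_unmoved[OF ne] by blast
  next
    case 2
    let ?H' = "H - {i} \<union> {j}"
    have H': "j \<in> ?H'" "i \<notin> ?H'" "?H' - {j} \<union> {i} = H" using 2 by auto
    have "H \<in> shift i j \<F> \<Longrightarrow> ?H' \<in> shift i j \<F>" using closed[OF _ 2] .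
    then show ?thesis
      using mem_shift_with_i[OF 2, of \<F>] mem_shift_with_j[OF H'(1,2), of \<F>, unfolded H'(3)]
      by blast
  next
    case 3
    let ?H' = "H - {j} \<union> {i}"
    have H': "i \<in> ?H'" "j \<notin> ?H'" "?H' - {i} \<union> {j} = H" using 3 by auto
    have "?H' \<in> shift i j \<F> \<Longrightarrow> H \<in> shift i j \<F>" using closed[OF _ H'(1,2)] H'(3) by simp
    then show ?thesis
      using mem_shift_with_j[OF 3, of \<F>] mem_shift_with_i[OF H'(1,2), of \<F>, unfolded H'(3)]
      by blast
  qed
qed

lemma card_exchange:
  assumes "finite G" "x \<in> G" "y \<notin> G"
  shows "card (G - {x} \<union> {y}) = card G"
  using assms card_Suc_Diff1[of G x] by simp

lemma card_exchange_Int: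
  assumes "finite G" "x \<in> G" "y \<notin> G"
  shows "card ((G - {x} \<union> {y}) \<inter> T) + of_bool (x \<in> T) = card (G \<inter> T) + of_bool (y \<in> T)"
proof -
  have fin: "finite (G \<inter> T - {x})" using assms(1) by simp
  have "card (G \<inter> T - {x}) + of_bool (x \<in> T) = card (G \<inter> T)"
    using assms(1,2) card_Suc_Diff1[of "G \<inter> T" x] by (cases "x \<in> T") simp_all
  moreover have "(G - {x} \<union> {y}) \<inter> T = (if y \<in> T then insert y (G \<inter> T - {x}) else G \<inter> T - {x})"
    by auto
  moreover have "y \<notin> G \<inter> T - {x}" using assms(3) by simp
  ultimately show ?thesis using fin by (cases "y \<in> T") simp_all
qed

lemma card_Int_exchange:
  assumes "finite G" "i \<in> T" "j \<notin> T"
  shows "card (G \<inter> (T - {i} \<union> {j})) + of_bool (i \<in> G) = card (G \<inter> T) + of_bool (j \<in> G)"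
proof -
  have fin: "finite (G \<inter> T - {i})" using assms(1) by simp
  have "card (G \<inter> T - {i}) + of_bool (i \<in> G) = card (G \<inter> T)"
    using assms(1,2) card_Suc_Diff1[of "G \<inter> T" i] by (cases "i \<in> G") simp_all
  moreover have "G \<inter> (T - {i} \<union> {j}) = (if j \<in> G then insert j (G \<inter> T - {i}) else G \<inter> T - {i})"
    using assms(3) by auto
  moreover have "j \<notin> G \<inter> T - {i}" using assms(3) by simp
  ultimately show ?thesis using fin by (cases "j \<in> G") simp_all
qed

lemma finite_if_mem_k_subsets:
  fixes M :: nat
  assumes "G \<in> k_subsets {1..M} L"
  shows "finite G"
proof (rule finite_subset)
  show "G \<subseteq> {1..M}" using assms by (simp add: k_subsets_def)
qed simp

lemma exchange_mem_k_subsets: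
  fixes M :: nat
  assumes "G \<in> k_subsets {1..M} L" "x \<in> G" "y \<notin> G" "y \<in> {1..M}"
  shows "G - {x} \<union> {y} \<in> k_subsets {1..M} L"
proof -
  have "card (G - {x} \<union> {y}) = card G"
    using card_exchange[OF finite_if_mem_k_subsets[OF assms(1)] assms(2,3)] .
  then show ?thesis using assms(1,4) unfolding k_subsets_def by blast
qed

lemma obtain_subset_avoiding:
  assumes "finite E" "a + card E \<le> card X"
  obtains P where "P \<subseteq> X - E" "card P = a"
proof -
  have "a \<le> card (X - E)"
    using assms diff_card_le_card_Diff[OF assms(1), of X] by linarith
  then show ?thesis using obtain_subset_with_card_n that by metis
qed

lemma obtain_subset_with_trace:
  fixes N :: nat
  assumes T: "T \<subseteq> {1..N}" and S: "S \<subseteq> T - {i, j}" and E: "finite E"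
    and size: "card S \<le> c" and room: "c - card S + card (T \<union> {i, j} \<union> E) \<le> N"
  obtains C where "C \<subseteq> {1..N} - {i, j}" "card C = c" "C \<inter> T = S" "C \<inter> E \<subseteq> T"
proof -
  have fin_T: "finite T" using T finite_subset by blast
  obtain P where P: "P \<subseteq> {1..N} - (T \<union> {i, j} \<union> E)" "card P = c - card S"
    using obtain_subset_avoiding[of "T \<union> {i, j} \<union> E" "c - card S" "{1..N}"] fin_T E room
    by auto
  have "finite S" using S fin_T finite_subset by blast
  moreover have "finite P" using P(1) finite_subset by blast
  moreover have "S \<inter> P = {}" using S P(1) by blast
  ultimately have "card (S \<union> P) = c" using P(2) size card_Un_disjoint by force
  moreover have "S \<union> P \<subseteq> {1..N} - {i, j}" using S T P(1) by blast
  moreover have "(S \<union> P) \<inter> T = S" using S P(1) by blast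
  moreover have "(S \<union> P) \<inter> E \<subseteq> T" using S P(1) by blast
  ultimately show ?thesis using that by blast
qed

text \<open>\<open>D\<close> meets \<open>T\<close> in \<open>T - {i}\<close> minus \<open>r\<close> common points of \<open>C\<^sub>1\<close> and \<open>C\<^sub>2\<close>, and avoids
  \<open>C\<^sub>1 \<union> C\<^sub>2\<close> outside \<open>T\<close>.\<close>

lemma obtain_boundary_set_meeting_little:
  fixes N M L :: nat
  assumes T: "T \<subseteq> {1..N}" "N \<le> M" "i \<in> T" "j \<notin> T" "card T = t + 2 * r"
    and C: "finite C\<^sub>1" "finite C\<^sub>2" "i \<notin> C\<^sub>1" "i \<notin> C\<^sub>2"
      "card (C\<^sub>1 \<inter> T) + 1 = t + r" "card (C\<^sub>2 \<inter> T) + 1 = t + r"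
    and common: "r \<le> card (C\<^sub>1 \<inter> C\<^sub>2 \<inter> T)"
    and "1 \<le> t" "t + r \<le> L" and room: "L + r + 1 + card (C\<^sub>1 \<union> C\<^sub>2 - T) \<le> N"
  obtains D where "D \<in> boundary_sets M L i j T (t + r)" "card (C\<^sub>1 \<inter> D) < t" "card (C\<^sub>2 \<inter> D) < t"
proof -
  have fin_T: "finite T" using T(1) finite_subset by blast
  obtain R where R: "R \<subseteq> C\<^sub>1 \<inter> C\<^sub>2 \<inter> T" "card R = r"
    using obtain_subset_with_card_n[OF common] by blast
  have fin_R: "finite R" using R(1) fin_T finite_subset by blast
  let ?S = "T - {i} - R"
  have R_sub: "R \<subseteq> T - {i}" using R(1) C(3) by blast
  have card_S: "card ?S + 1 = t + r"
    using T(3,5) fin_T R_sub R(2) fin_R \<open>1 \<le> t\<close> by (simp add: card_Diff_subset)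
  let ?U = "T \<union> (C\<^sub>1 \<union> C\<^sub>2 - T)"
  have "T \<union> {i, j} \<union> (C\<^sub>1 \<union> C\<^sub>2) = insert j ?U"
    using T(3) by blast
  moreover have "card (insert j ?U) \<le> Suc (card ?U)"
    using fin_T C(1,2) by (simp add: card_insert_if)
  moreover have "card ?U \<le> t + 2 * r + card (C\<^sub>1 \<union> C\<^sub>2 - T)"
    using T(5) card_Un_le[of T "C\<^sub>1 \<union> C\<^sub>2 - T"] by simp
  ultimately have "card (T \<union> {i, j} \<union> (C\<^sub>1 \<union> C\<^sub>2)) \<le> t + 2 * r + 1 + card (C\<^sub>1 \<union> C\<^sub>2 - T)"
    by simp
  then have "L - 1 - card ?S + card (T \<union> {i, j} \<union> (C\<^sub>1 \<union> C\<^sub>2)) \<le> N"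
    using card_S room \<open>t + r \<le> L\<close> by linarith
  moreover have "?S \<subseteq> T - {i, j}" using T(4) by blast
  moreover have "card ?S \<le> L - 1" using card_S \<open>t + r \<le> L\<close> by linarith
  ultimately obtain D where D: "D \<subseteq> {1..N} - {i, j}" "card D = L - 1" "D \<inter> T = ?S"
      "D \<inter> (C\<^sub>1 \<union> C\<^sub>2) \<subseteq> T"
    using obtain_subset_with_trace[OF T(1), of ?S i j "C\<^sub>1 \<union> C\<^sub>2" "L - 1"] C(1,2) by blast
  have small: "card (C \<inter> D) < t"
    if "i \<notin> C" "card (C \<inter> T) + 1 = t + r" "R \<subseteq> C" "C \<subseteq> C\<^sub>1 \<union> C\<^sub>2" "finite C" for C
  proof -
    have "C \<inter> D = C \<inter> T - R" using that(1,4) D(3,4) by blast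
    moreover have "R \<subseteq> C \<inter> T" using that(3) R(1) by blast
    ultimately show ?thesis
      using that(2,5) R(2) fin_R \<open>1 \<le> t\<close> by (simp add: card_Diff_subset)
  qed
  have "D \<in> boundary_sets M L i j T (t + r)"
    using D(1-3) card_S T(2) unfolding boundary_sets_def by auto
  moreover have "card (C\<^sub>1 \<inter> D) < t" "card (C\<^sub>2 \<inter> D) < t"
    using small[OF C(3) C(5) _ _ C(1)] small[OF C(4) C(6) _ _ C(2)] R(1) by blast+
  ultimately show ?thesis using that by blast
qed

locale shifts_to_threshold =
  fixes \<A> :: "nat set set" and M L i j :: nat and T :: "nat set" and s :: nat
  assumes family: "\<A> \<subseteq> k_subsets {1..M} L"
    and shift_eq: "shift i j \<A> = threshold_family M L T s"
    and ne: "i \<noteq> j"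
begin

lemma mem_shift_iff: "G \<in> shift i j \<A> \<longleftrightarrow> G \<in> k_subsets {1..M} L \<and> s \<le> card (G \<inter> T)"
  using shift_eq by (simp add: threshold_family_def)

lemma eq_threshold_if_same_side:
  assumes same: "i \<in> T \<longleftrightarrow> j \<in> T"
  shows "\<A> = threshold_family M L T s"
proof (cases "j \<in> {1..M}")
  case True
  have "shift i j \<A> = \<A>"
  proof (rule shift_eq_self_if_reverse_closed[OF ne])
    fix H assume H: "H \<in> shift i j \<A>" "i \<in> H" "j \<notin> H"
    then have K: "H \<in> k_subsets {1..M} L" and count: "s \<le> card (H \<inter> T)"
      using mem_shift_iff by auto
    have "card ((H - {i} \<union> {j}) \<inter> T) = card (H \<inter> T)"
      using card_exchange_Int[OF finite_if_mem_k_subsets[OF K] H(2,3), of T] same by simp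
    then show "H - {i} \<union> {j} \<in> shift i j \<A>"
      using exchange_mem_k_subsets[OF K H(2,3) True] count mem_shift_iff by simp
  qed
  then show ?thesis using shift_eq by simp
next
  case False
  then have "j \<notin> G" if "G \<in> \<A>" for G
    using that family unfolding k_subsets_def by blast
  then have "shift i j \<A> = \<A>" by (rule shift_eq_self_if_no_j)
  then show ?thesis using shift_eq by simp
qed

lemma i_mem_T_if_j_mem_T:
  assumes jT: "j \<in> T" and T: "T \<subseteq> {1..M}" and "s \<le> card T" "0 < s" "s \<le> L"
    and room: "L + card T + 1 \<le> M + s"
  shows "i \<in> T"
proof (rule ccontr)
  assume iT: "i \<notin> T"
  have fin_T: "finite T" using T finite_subset by blast
  have "s - 1 \<le> card (T - {i, j})"
    using jT iT fin_T \<open>s \<le> card T\<close> by simp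
  then obtain W where W: "W \<subseteq> T - {i, j}" "card W = s - 1" "finite W"
    using obtain_subset_with_card_n by metis
  have "T \<union> {i, j} \<union> {} = insert i T" using jT by blast
  then have "card (T \<union> {i, j} \<union> {}) = card T + 1"
    using iT fin_T by simp
  then have "L - 1 - card W + card (T \<union> {i, j} \<union> {}) \<le> M"
    using W(2) room \<open>0 < s\<close> \<open>s \<le> L\<close> by arith
  moreover have "card W \<le> L - 1" using W(2) \<open>s \<le> L\<close> by arith
  ultimately obtain C where C: "C \<subseteq> {1..M} - {i, j}" "card C = L - 1" "C \<inter> T = W"
    using obtain_subset_with_trace[OF T W(1) finite.emptyI] by blast
  have fin_C: "finite C" using C(1) finite_subset by blast
  have "j \<notin> C" using C(1) by blast
  have "insert j C \<in> k_subsets {1..M} L"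
    using C(1,2) jT T fin_C \<open>j \<notin> C\<close> \<open>0 < s\<close> \<open>s \<le> L\<close> by (auto simp: k_subsets_def)
  moreover have "insert j C \<inter> T = insert j W" using C(3) jT by blast
  moreover have "j \<notin> W" using W(1) by blast
  ultimately have G: "insert j C \<in> shift i j \<A>"
    using mem_shift_iff W(2,3) \<open>0 < s\<close> by simp
  have "i \<notin> insert j C" using C(1) ne by blast
  then have "insert j C - {j} \<union> {i} \<in> shift i j \<A>"
    using mem_shift_move_to_i[OF G insertI1] by blast
  moreover have "(insert j C - {j} \<union> {i}) \<inter> T = W" using C(1,3) iT by blast
  ultimately have "s \<le> s - 1"
    using mem_shift_iff W(2) by simp
  then show False using \<open>0 < s\<close> by linarith
qed

lemma boundary_exactly_one:
  assumes C: "C \<in> boundary_sets M L i j T s" and "i \<in> T" "j \<notin> T" "i \<in> {1..M}" "0 < L"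
  shows "insert j C \<in> \<A> \<longleftrightarrow> insert i C \<notin> \<A>"
proof -
  have C_sub: "C \<subseteq> {1..M} - {i, j}" and card_C: "card C = L - 1"
    and count: "card (C \<inter> T) + 1 = s"
    using C by (auto simp: boundary_sets_def)
  have fin_C: "finite C" using C_sub finite_subset by blast
  have "i \<notin> C" "j \<notin> C" using C_sub by auto
  have "insert i C \<in> k_subsets {1..M} L"
    using C_sub card_C fin_C assms(4,5) \<open>i \<notin> C\<close> by (auto simp: k_subsets_def)
  moreover have "card (insert i C \<inter> T) = s"
    using count fin_C \<open>i \<notin> C\<close> \<open>i \<in> T\<close> by simp
  ultimately have "insert i C \<in> shift i j \<A>" using mem_shift_iff by simp
  moreover have "insert i C - {i} \<union> {j} = insert j C" using C_sub by auto
  ultimately have one: "insert i C \<in> \<A> \<or> insert j C \<in> \<A>"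
    using mem_shift_with_i[of i "insert i C" j \<A>] C_sub ne by auto
  have "insert j C \<notin> shift i j \<A>"
    using mem_shift_iff count \<open>j \<notin> T\<close> by simp
  moreover have "insert j C - {j} \<union> {i} = insert i C" using C_sub by auto
  ultimately have "\<not> (insert i C \<in> \<A> \<and> insert j C \<in> \<A>)"
    using mem_shift_with_j[of j "insert j C" i \<A>] C_sub ne by auto
  with one show ?thesis by blast
qed

lemma mem_iff_off_boundary:
  assumes iT: "i \<in> T" and jT: "j \<notin> T" and G: "G \<in> k_subsets {1..M} L"
    and not_i_boundary: "\<not> (i \<in> G \<and> j \<notin> G \<and> card (G \<inter> T) = s)"
    and not_j_boundary: "\<not> (j \<in> G \<and> i \<notin> G \<and> card (G \<inter> T) + 1 = s)"
  shows "G \<in> \<A> \<longleftrightarrow> s \<le> card (G \<inter> T)"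
proof -
  have fin_G: "finite G" using finite_if_mem_k_subsets[OF G] .
  consider "i \<in> G \<longleftrightarrow> j \<in> G" | "i \<in> G" "j \<notin> G" | "j \<in> G" "i \<notin> G"
    by blast
  then show ?thesis
  proof cases
    case 1
    then show ?thesis using mem_shift_unmoved[OF ne 1, of \<A>] mem_shift_iff[of G] G by simp
  next
    case 2
    let ?H = "G - {i} \<union> {j}"
    have H: "j \<in> ?H" "i \<notin> ?H" "?H - {j} \<union> {i} = G" using 2 by auto
    have count_H: "card (?H \<inter> T) + 1 = card (G \<inter> T)"
      using card_exchange_Int[OF fin_G 2, of T] iT jT by simp
    show ?thesis
    proof
      assume "G \<in> \<A>"
      then have "G \<in> shift i j \<A>" using mem_shift_with_i[OF 2] by blast
      then show "s \<le> card (G \<inter> T)" using mem_shift_iff by simp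
    next
      assume "s \<le> card (G \<inter> T)"
      then have "s \<le> card (?H \<inter> T)" using not_i_boundary 2 count_H by simp
      have "G \<in> \<A> \<or> ?H \<in> \<A>"
        using mem_shift_with_i[OF 2, of \<A>] mem_shift_iff[of G] G \<open>s \<le> card (G \<inter> T)\<close> by simp
      moreover have "G \<in> \<A>" if "?H \<in> \<A>"
      proof -
        have "?H \<in> shift i j \<A>"
          using that family mem_shift_iff \<open>s \<le> card (?H \<inter> T)\<close> by blast
        then show ?thesis using mem_shift_with_j[OF H(1,2)] H(3) by simp
      qed
      ultimately show "G \<in> \<A>" by blast
    qed
  next
    case 3
    let ?H = "G - {j} \<union> {i}"
    have H: "i \<in> ?H" "j \<notin> ?H" "?H - {i} \<union> {j} = G" using 3 by auto
    have count_H: "card (?H \<inter> T) = card (G \<inter> T) + 1"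
      using card_exchange_Int[OF fin_G 3, of T] iT jT by simp
    show ?thesis
    proof
      assume "G \<in> \<A>"
      show "s \<le> card (G \<inter> T)"
      proof (rule ccontr)
        assume "\<not> s \<le> card (G \<inter> T)"
        then have "\<not> s \<le> card (?H \<inter> T)" using not_j_boundary 3 count_H by simp
        then have "?H \<notin> shift i j \<A>" using mem_shift_iff by simp
        then show False using mem_shift_with_i[OF H(1,2)] H(3) \<open>G \<in> \<A>\<close> by simp
      qed
    next
      assume "s \<le> card (G \<inter> T)"
      then have "G \<in> shift i j \<A>" using mem_shift_iff G by simp
      then show "G \<in> \<A>" using mem_shift_with_j[OF 3] by blast
    qed
  qed
qed

lemma eq_threshold_if_boundary_choice:
  assumes iT: "i \<in> T" and jT: "j \<notin> T" and iM: "i \<in> {1..M}" and "0 < L"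
    and x: "x \<in> {i, j}"
    and choice: "\<And>C. C \<in> boundary_sets M L i j T s \<Longrightarrow> insert x C \<in> \<A>"
  shows "\<A> = threshold_family M L (T - {i} \<union> {x}) s"
proof (rule set_eqI)
  fix G
  let ?T' = "T - {i} \<union> {x}"
  show "G \<in> \<A> \<longleftrightarrow> G \<in> threshold_family M L ?T' s"
  proof (cases "G \<in> k_subsets {1..M} L")
    case False
    then show ?thesis using family by (auto simp: threshold_family_def)
  next
    case G: True
    have fin_G: "finite G" using finite_if_mem_k_subsets[OF G] .
    have exactly_one: "insert x C \<in> \<A> \<and> (insert j C \<in> \<A> \<longleftrightarrow> insert i C \<notin> \<A>)"
      if "C \<in> boundary_sets M L i j T s" for C
      using choice[OF that] boundary_exactly_one[OF that iT jT iM \<open>0 < L\<close>] by blast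
    have count_j: "card (G \<inter> (T - {i} \<union> {j})) + of_bool (i \<in> G) = card (G \<inter> T) + of_bool (j \<in> G)"
      using card_Int_exchange[OF fin_G iT jT] .
    consider (i_boundary) "i \<in> G" "j \<notin> G" "card (G \<inter> T) = s"
      | (j_boundary) "j \<in> G" "i \<notin> G" "card (G \<inter> T) + 1 = s"
      | (off) "\<not> (i \<in> G \<and> j \<notin> G \<and> card (G \<inter> T) = s)"
          "\<not> (j \<in> G \<and> i \<notin> G \<and> card (G \<inter> T) + 1 = s)"
      by blast
    then show ?thesis
    proof cases
      case i_boundary
      let ?C = "G - {i}"
      have "?C \<inter> T = G \<inter> T - {i}" by blast
      then have "card (?C \<inter> T) + 1 = s"
        using i_boundary iT fin_G card_Suc_Diff1[of "G \<inter> T" i] by simp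
      then have "?C \<in> boundary_sets M L i j T s"
        using G i_boundary fin_G by (auto simp: boundary_sets_def k_subsets_def)
      then have "G \<in> \<A> \<longleftrightarrow> x = i"
        using exactly_one[of ?C] x i_boundary by (auto simp: insert_absorb)
      moreover have "s \<le> card (G \<inter> ?T') \<longleftrightarrow> x = i"
        using x count_j i_boundary iT by (auto simp: insert_absorb)
      ultimately show ?thesis using G by (simp add: threshold_family_def)
    next
      case j_boundary
      let ?C = "G - {j}"
      have "?C \<inter> T = G \<inter> T" using jT by blast
      then have "?C \<in> boundary_sets M L i j T s"
        using G j_boundary fin_G by (auto simp: boundary_sets_def k_subsets_def)
      then have "G \<in> \<A> \<longleftrightarrow> x = j"
        using exactly_one[of ?C] x j_boundary ne by (auto simp: insert_absorb)
      moreover have "s \<le> card (G \<inter> ?T') \<longleftrightarrow> x = j"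
        using x count_j j_boundary iT ne by (auto simp: insert_absorb)
      ultimately show ?thesis using G by (simp add: threshold_family_def)
    next
      case off
      have "G \<in> \<A> \<longleftrightarrow> s \<le> card (G \<inter> T)"
        using mem_iff_off_boundary[OF iT jT G off] .
      moreover have "s \<le> card (G \<inter> T) \<longleftrightarrow> s \<le> card (G \<inter> ?T')"
        using x count_j off iT by (cases "i \<in> G"; cases "j \<in> G") (auto simp: insert_absorb)
      ultimately show ?thesis using G by (simp add: threshold_family_def)
    qed
  qed
qed

end

lemma cross_t_intersecting_commute:
  "cross_t_intersecting \<A> \<B> t \<longleftrightarrow> cross_t_intersecting \<B> \<A> t"
  unfolding cross_t_intersecting_def by (metis Int_commute)

lemma boundary_choices_agree:
  assumes cross: "cross_t_intersecting \<A> \<B> t" and small: "card (C \<inter> D) < t"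
    and "i \<noteq> j" "i \<notin> C" "j \<notin> C" "i \<notin> D" "j \<notin> D"
    and one_A: "insert j C \<in> \<A> \<longleftrightarrow> insert i C \<notin> \<A>"
    and one_B: "insert j D \<in> \<B> \<longleftrightarrow> insert i D \<notin> \<B>"
  shows "insert i C \<in> \<A> \<longleftrightarrow> insert i D \<in> \<B>"
proof -
  have "insert i C \<inter> insert j D = C \<inter> D" "insert j C \<inter> insert i D = C \<inter> D"
    using assms(3-7) by auto
  then show ?thesis
    using cross small one_A one_B unfolding cross_t_intersecting_def by (metis not_less)
qed

lemma obtain_exchange_pair:
  assumes fin: "finite C" "finite C'" and card: "card C = card C'" "card (C \<inter> T) = card (C' \<inter> T)"
    and "C \<noteq> C'"
  obtains x y where "x \<in> C - C'" "y \<in> C' - C" "x \<in> T \<longleftrightarrow> y \<in> T"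
proof -
  have two_sided: "X - Y \<noteq> {} \<and> Y - X \<noteq> {}"
    if "finite X" "finite Y" "card X = card Y" "X \<noteq> Y" for X Y :: "'a set"
    using that card_subset_eq[of Y X] card_subset_eq[of X Y] by auto
  show ?thesis
  proof (cases "C \<inter> T = C' \<inter> T")
    case True
    have "card (C - T) = card (C' - T)"
      using fin card by (simp add: card_Diff_subset_Int)
    moreover have "C - T \<noteq> C' - T" using True \<open>C \<noteq> C'\<close> by blast
    ultimately obtain x y where "x \<in> (C - T) - (C' - T)" "y \<in> (C' - T) - (C - T)"
      using two_sided[of "C - T" "C' - T"] fin by auto
    then show ?thesis using that by blast
  next
    case False
    then obtain x y where "x \<in> (C \<inter> T) - (C' \<inter> T)" "y \<in> (C' \<inter> T) - (C \<inter> T)"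
      using two_sided[of "C \<inter> T" "C' \<inter> T"] fin card by auto
    then show ?thesis using that by blast
  qed
qed

locale cross_shifts_to_threshold =
  A: shifts_to_threshold \<A> n k i j T "t + r" + B: shifts_to_threshold \<B> m l i j T "t + r"
  for \<A> \<B> :: "nat set set" and n k m l i j :: nat and T :: "nat set" and t r N :: nat +
  assumes cross: "cross_t_intersecting \<A> \<B> t"
    and T_sub: "T \<subseteq> {1..N}" and N_le_n: "N \<le> n" and N_le_m: "N \<le> m"
    and i_in_T: "i \<in> T" and j_notin_T: "j \<notin> T" and card_T: "card T = t + 2 * r"
    and two_le_t: "2 \<le> t" and k_ge: "t + r \<le> k" and l_ge: "t + r \<le> l"
    and room: "k + l + 2 \<le> N + t"
begin

lemma swapped: "cross_shifts_to_threshold \<B> \<A> m l n k i j T t r N"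
  using B.shifts_to_threshold_axioms A.shifts_to_threshold_axioms cross T_sub N_le_n N_le_m
    i_in_T j_notin_T card_T two_le_t k_ge l_ge room
  by (simp add: cross_shifts_to_threshold_def cross_shifts_to_threshold_axioms_def
      cross_t_intersecting_commute)

lemma boundary_exactly_one:
  assumes "C \<in> boundary_sets n k i j T (t + r)"
  shows "insert j C \<in> \<A> \<longleftrightarrow> insert i C \<notin> \<A>"
proof (rule A.boundary_exactly_one[OF assms i_in_T j_notin_T])
  show "i \<in> {1..n}" using i_in_T T_sub N_le_n by auto
  show "0 < k" using k_ge two_le_t by linarith
qed

lemma boundary_choice_exchange:
  assumes C: "C \<in> boundary_sets n k i j T (t + r)"
    and C': "C - {x} \<union> {y} \<in> boundary_sets n k i j T (t + r)"
  shows "insert i C \<in> \<A> \<longleftrightarrow> insert i (C - {x} \<union> {y}) \<in> \<A>"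
proof -
  let ?C' = "C - {x} \<union> {y}"
  have C_sub: "C \<subseteq> {1..n} - {i, j}" and card_C: "card C = k - 1"
    and count_C: "card (C \<inter> T) + 1 = t + r"
    using C by (simp_all add: boundary_sets_def)
  have C'_sub: "?C' \<subseteq> {1..n} - {i, j}" and count_C': "card (?C' \<inter> T) + 1 = t + r"
    using C' by (simp_all add: boundary_sets_def)
  have fin_C: "finite C" using C_sub finite_subset by blast
  have fin_C': "finite ?C'" using fin_C by simp
  have "card (C \<inter> T) - 1 \<le> card (C \<inter> T - {x})"
    by (simp add: card_Diff_singleton_if)
  also have "\<dots> \<le> card (C \<inter> ?C' \<inter> T)"
    by (rule card_mono) (use fin_C in auto)
  finally have common: "r \<le> card (C \<inter> ?C' \<inter> T)" using count_C two_le_t by linarith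
  have "card (C \<union> ?C' - T) \<le> card (insert y (C - T))"
    by (rule card_mono) (use fin_C in auto)
  also have "\<dots> \<le> card (C - T) + 1"
    using fin_C by (simp add: card_insert_if)
  finally have room': "l + r + 1 + card (C \<union> ?C' - T) \<le> N"
    using card_Int_Diff[OF fin_C, of T] card_C count_C room k_ge by linarith
  obtain D where D: "D \<in> boundary_sets m l i j T (t + r)" "card (C \<inter> D) < t" "card (?C' \<inter> D) < t"
    using obtain_boundary_set_meeting_little[OF T_sub N_le_m i_in_T j_notin_T card_T fin_C fin_C'
        _ _ count_C count_C' common _ l_ge room'] C_sub C'_sub two_le_t by auto
  have D_sub: "i \<notin> D" "j \<notin> D" using D(1) by (auto simp: boundary_sets_def)
  have one_D: "insert j D \<in> \<B> \<longleftrightarrow> insert i D \<notin> \<B>"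
    using cross_shifts_to_threshold.boundary_exactly_one[OF swapped D(1)] .
  have "insert i C \<in> \<A> \<longleftrightarrow> insert i D \<in> \<B>"
    using boundary_choices_agree[OF cross D(2) A.ne _ _ D_sub boundary_exactly_one[OF C] one_D] C_sub
    by blast
  moreover have "insert i ?C' \<in> \<A> \<longleftrightarrow> insert i D \<in> \<B>"
    using boundary_choices_agree[OF cross D(3) A.ne _ _ D_sub boundary_exactly_one[OF C'] one_D] C'_sub
    by blast
  ultimately show ?thesis by simp
qed

lemma boundary_choice_constant:
  assumes "C \<in> boundary_sets n k i j T (t + r)" "C' \<in> boundary_sets n k i j T (t + r)"
  shows "insert i C \<in> \<A> \<longleftrightarrow> insert i C' \<in> \<A>"
  using assms
proof (induction "card (C - C')" arbitrary: C)
  case 0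
  have "finite C" "finite C'" "card C = card C'"
    using "0.prems" finite_subset by (auto simp: boundary_sets_def)
  moreover have "C \<subseteq> C'" using "0.hyps" \<open>finite C\<close> by simp
  ultimately have "C = C'" using card_subset_eq by blast
  then show ?case by simp
next
  case (Suc d C)
  have C_sub: "C \<subseteq> {1..n} - {i, j}" and C'_sub: "C' \<subseteq> {1..n} - {i, j}"
    using Suc.prems by (auto simp: boundary_sets_def)
  have fin: "finite C" "finite C'" using C_sub C'_sub finite_subset by blast+
  have "C \<noteq> C'" using Suc.hyps(2) by auto
  moreover have "card C = card C'" "card (C \<inter> T) = card (C' \<inter> T)"
    using Suc.prems by (auto simp: boundary_sets_def)
  ultimately obtain x y where xy: "x \<in> C - C'" "y \<in> C' - C" "x \<in> T \<longleftrightarrow> y \<in> T"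
    using obtain_exchange_pair[OF fin] by metis
  let ?C2 = "C - {x} \<union> {y}"
  have "card ?C2 = card C" using card_exchange[OF fin(1)] xy by blast
  moreover have "card (?C2 \<inter> T) = card (C \<inter> T)"
    using card_exchange_Int[OF fin(1), of x y T] xy by auto
  moreover have "?C2 \<subseteq> {1..n} - {i, j}" using C_sub C'_sub xy by blast
  ultimately have C2: "?C2 \<in> boundary_sets n k i j T (t + r)"
    using Suc.prems(1) by (simp add: boundary_sets_def)
  have "?C2 - C' = C - C' - {x}" using xy by blast
  then have "d = card (?C2 - C')" using Suc.hyps(2) xy fin by simp
  then have "insert i ?C2 \<in> \<A> \<longleftrightarrow> insert i C' \<in> \<A>"
    using Suc.hyps(1) C2 Suc.prems(2) by blast
  then show ?case using boundary_choice_exchange[OF Suc.prems(1) C2] by blast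
qed

lemma obtain_common_boundary_choice:
  obtains x where "x \<in> {i, j}" "x \<in> {1..n}" "x \<in> {1..m}"
    "\<And>C. C \<in> boundary_sets n k i j T (t + r) \<Longrightarrow> insert x C \<in> \<A>"
    "\<And>D. D \<in> boundary_sets m l i j T (t + r) \<Longrightarrow> insert x D \<in> \<B>"
proof -
  have fin_T: "finite T" using T_sub finite_subset by blast
  have "T - {i, j} = T - {i}" using j_notin_T by blast
  then have "t + r - 1 \<le> card (T - {i, j})"
    using i_in_T card_T fin_T by simp
  then obtain W where W: "W \<subseteq> T - {i, j}" "card W = t + r - 1"
    using obtain_subset_with_card_n by metis
  have "T \<union> {i, j} \<union> {} = insert j T" using i_in_T by blast
  then have room_C\<^sub>0: "k - 1 - card W + card (T \<union> {i, j} \<union> {}) \<le> N"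
    using W(2) card_T j_notin_T fin_T room k_ge l_ge by simp
  have "card W \<le> k - 1" using W(2) k_ge by linarith
  from obtain_subset_with_trace[OF T_sub W(1) finite.emptyI this room_C\<^sub>0]
  obtain C\<^sub>0 where C\<^sub>0: "C\<^sub>0 \<subseteq> {1..N} - {i, j}" "card C\<^sub>0 = k - 1" "C\<^sub>0 \<inter> T = W" .
  have fin_C\<^sub>0: "finite C\<^sub>0" using C\<^sub>0(1) finite_subset by blast
  have i_C\<^sub>0: "i \<notin> C\<^sub>0" using C\<^sub>0(1) by blast
  have count_C\<^sub>0: "card (C\<^sub>0 \<inter> T) + 1 = t + r" using C\<^sub>0(3) W(2) two_le_t by simp
  have C\<^sub>0_bd: "C\<^sub>0 \<in> boundary_sets n k i j T (t + r)"
    using C\<^sub>0 count_C\<^sub>0 N_le_n by (auto simp: boundary_sets_def)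
  have room_D\<^sub>0: "l + r + 1 + card (C\<^sub>0 \<union> C\<^sub>0 - T) \<le> N"
    using card_Int_Diff[OF fin_C\<^sub>0, of T] C\<^sub>0(2) count_C\<^sub>0 room k_ge by simp
  have "r \<le> card (C\<^sub>0 \<inter> C\<^sub>0 \<inter> T)" "1 \<le> t" using count_C\<^sub>0 two_le_t by simp_all
  from obtain_boundary_set_meeting_little[OF T_sub N_le_m i_in_T j_notin_T card_T fin_C\<^sub>0 fin_C\<^sub>0
      i_C\<^sub>0 i_C\<^sub>0 count_C\<^sub>0 count_C\<^sub>0 this l_ge room_D\<^sub>0]
  obtain D\<^sub>0 where D\<^sub>0: "D\<^sub>0 \<in> boundary_sets m l i j T (t + r)" "card (C\<^sub>0 \<inter> D\<^sub>0) < t" .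
  have D\<^sub>0_sub: "i \<notin> D\<^sub>0" "j \<notin> D\<^sub>0" using D\<^sub>0(1) by (auto simp: boundary_sets_def)
  have one_D\<^sub>0: "insert j D\<^sub>0 \<in> \<B> \<longleftrightarrow> insert i D\<^sub>0 \<notin> \<B>"
    using cross_shifts_to_threshold.boundary_exactly_one[OF swapped D\<^sub>0(1)] .
  have agree: "insert i C\<^sub>0 \<in> \<A> \<longleftrightarrow> insert i D\<^sub>0 \<in> \<B>"
    using boundary_choices_agree[OF cross D\<^sub>0(2) A.ne _ _ D\<^sub>0_sub boundary_exactly_one[OF C\<^sub>0_bd] one_D\<^sub>0]
      C\<^sub>0(1) by blast
  define x where "x = (if insert i C\<^sub>0 \<in> \<A> then i else j)"
  have all_A: "insert x C \<in> \<A>" if "C \<in> boundary_sets n k i j T (t + r)" for C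
    using boundary_choice_constant[OF that C\<^sub>0_bd] boundary_exactly_one[OF that]
      boundary_exactly_one[OF C\<^sub>0_bd] unfolding x_def by auto
  have all_B: "insert x D \<in> \<B>" if "D \<in> boundary_sets m l i j T (t + r)" for D
    using cross_shifts_to_threshold.boundary_choice_constant[OF swapped that D\<^sub>0(1)]
      cross_shifts_to_threshold.boundary_exactly_one[OF swapped that] one_D\<^sub>0 agree
    unfolding x_def by auto
  have "insert x C\<^sub>0 \<in> k_subsets {1..n} k" using all_A[OF C\<^sub>0_bd] A.family by blast
  moreover have "insert x D\<^sub>0 \<in> k_subsets {1..m} l" using all_B[OF D\<^sub>0(1)] B.family by blast
  ultimately have "x \<in> {1..n}" "x \<in> {1..m}" by (auto simp: k_subsets_def)
  moreover have "x \<in> {i, j}" unfolding x_def by simp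
  ultimately show ?thesis using that all_A all_B by blast
qed

lemma obtain_common_threshold_set:
  obtains T' where "T' \<subseteq> {1..n}" "T' \<subseteq> {1..m}" "card T' = card T"
    "\<A> = threshold_family n k T' (t + r)" "\<B> = threshold_family m l T' (t + r)"
proof -
  obtain x where x: "x \<in> {i, j}" "x \<in> {1..n}" "x \<in> {1..m}"
    "\<And>C. C \<in> boundary_sets n k i j T (t + r) \<Longrightarrow> insert x C \<in> \<A>"
    "\<And>D. D \<in> boundary_sets m l i j T (t + r) \<Longrightarrow> insert x D \<in> \<B>"
    using obtain_common_boundary_choice by blast
  have i_mem: "i \<in> {1..n}" "i \<in> {1..m}" using i_in_T T_sub N_le_n N_le_m by auto
  have "0 < k" "0 < l" using k_ge l_ge two_le_t by linarith+
  have "card (T - {i} \<union> {x}) = card T"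
    using x(1) card_exchange[OF _ i_in_T j_notin_T] T_sub finite_subset i_in_T
    by (auto simp: insert_absorb)
  moreover have "T - {i} \<union> {x} \<subseteq> {1..n}" "T - {i} \<union> {x} \<subseteq> {1..m}"
    using x(2,3) T_sub N_le_n N_le_m by auto
  ultimately show ?thesis
    using that A.eq_threshold_if_boundary_choice[OF i_in_T j_notin_T i_mem(1) \<open>0 < k\<close> x(1,4)]
      B.eq_threshold_if_boundary_choice[OF i_in_T j_notin_T i_mem(2) \<open>0 < l\<close> x(1,5)]
    by blast
qed

end

theorem theorem4p5:
  fixes m n k l t r i j :: nat and \<A> \<B> :: "nat set set" and T :: "nat set"
  assumes "m > 0" "n > 0" "k > 0" "l > 0" "t > 0" "r > 0"
    and "t \<ge> 2" and "k \<ge> l" and "l \<ge> t + r"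
    and "min m n \<ge> k + l - t + 2"
    and "i \<in> {1..max m n}" and "j \<in> {1..max m n}" and "i < j"
    and "\<A> \<subseteq> k_subsets {1..n} k" and "\<B> \<subseteq> k_subsets {1..m} l"
    and "cross_t_intersecting \<A> \<B> t"
    and "T \<subset> {1..min m n}" and "card T = t + 2 * r"
    and "shift i j \<A> = {A \<in> k_subsets {1..n} k. card (A \<inter> T) \<ge> t + r}"
    and "shift i j \<B> = {B \<in> k_subsets {1..m} l. card (B \<inter> T) \<ge> t + r}"
  shows "\<exists>T'. T' \<subset> {1..min m n} \<and> card T' = t + 2 * r \<and>
           \<A> = {A \<in> k_subsets {1..n} k. card (A \<inter> T') \<ge> t + r} \<and>
           \<B> = {B \<in> k_subsets {1..m} l. card (B \<inter> T') \<ge> t + r}"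
proof -
  define N where "N = min m n"
  interpret A: shifts_to_threshold \<A> n k i j T "t + r"
    using assms(13,14,19) by unfold_locales (simp_all add: threshold_family_def)
  interpret B: shifts_to_threshold \<B> m l i j T "t + r"
    using assms(13,15,20) by unfold_locales (simp_all add: threshold_family_def)
  have T_sub: "T \<subseteq> {1..N}" and card_T_less: "card T < N"
    using assms(17) psubset_card_mono[of "{1..N}" T] unfolding N_def by auto
  have room: "k + l + 2 \<le> N + t" using assms(9,10) unfolding N_def by linarith
  consider "i \<in> T \<longleftrightarrow> j \<in> T" | "i \<notin> T" "j \<in> T" | "i \<in> T" "j \<notin> T" by blast
  then show ?thesis
  proof cases
    case 1
    then show ?thesis
      using A.eq_threshold_if_same_side B.eq_threshold_if_same_side assms(17,18)
      by (auto simp: threshold_family_def)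
  next
    case 2
    have "i \<in> T"
      by (rule A.i_mem_T_if_j_mem_T[OF 2(2)]) (use T_sub room assms(7-9,18) in \<open>auto simp: N_def\<close>)
    with 2 show ?thesis by blast
  next
    case 3
    interpret cross_shifts_to_threshold \<A> \<B> n k m l i j T t r N
      using assms(7-9,16,18) T_sub room 3 by unfold_locales (auto simp: N_def)
    obtain T' where T': "T' \<subseteq> {1..n}" "T' \<subseteq> {1..m}" "card T' = card T"
      "\<A> = threshold_family n k T' (t + r)" "\<B> = threshold_family m l T' (t + r)"
      by (rule obtain_common_threshold_set)
    have sub: "T' \<subseteq> {1..N}" using T'(1,2) unfolding N_def by (auto simp: subset_iff)
    have "card T' < card {1..N}" using T'(3) card_T_less by simp
    with sub have "T' \<subset> {1..N}" by (metis less_irrefl psubsetI)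
    then show ?thesis
      using T'(3-5) assms(18) unfolding N_def threshold_family_def
      by (intro exI[of _ T'] conjI) simp_all
  qed
qed

end
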